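(* Let $\tau$ be a state of $A$. For every $\lambda\ge0$ and every $\mathbf{x}\in\mathbb{R}^{d^2-1}$ with $\mathbf{x},\lambda\mathbf{x}\in\mathcal{S}$, we have $\tilde\Phi_\tau(\lambda\mathbf{x})=\lambda\tilde\Phi_\tau(\mathbf{x})$. Furthermore $\tilde\Phi_\tau(\mathbf{x})\ge0$ for all $\mathbf{x}\in\mathcal{S}$.
   Context: $G$ is a compact group with normalized Haar measure $dg$; finite-dimensional systems $A$ and $R$ carry continuous unitary representations $U_A,U_R$, and $d=d_R$. The $G$-twirl on $RA$ is $\mathcal{G}(M)=\int dg\,(U_R(g)\otimes U_A(g))M(U_R(g)\otimes U_A(g))^\dagger$. $H_{\min}(R|A)_\Omega=-\log_2\inf_{X\ge0}\{\mathrm{tr}[X]:\mathbb{1}_R\otimes X\ge\Omega_{RA}\}$, and $H_\eta(\tau):=H_{\min}(R|A)_{\mathcal{G}(\eta\otimes\tau)}$. Fix traceless Hermitian operators $X_1,\dots,X_{d^2-1}$ on $\mathcal{H}_R$ such that $\{\mathbb{1}/d,X_1,\dots,X_{d^2-1}\}$ is an orthogonal basis of the Hermitian operators and $\|X_k\|_\infty=1/d$. For $\mathbf{x}\in\mathbb{R}^{d^2-1}$ set $\eta(\mathbf{x})=\mathbb{1}/d+\sum_k x_kX_k$, and let $\mathcal{S}$ be the set of $\mathbf{x}$ for which $\eta(\mathbf{x})$ is a state. Define $\Phi_\tau(\mathbf{x})=2^{-H_{\eta(\mathbf{x})}(\tau)}$ and $\tilde\Phi_\tau(\mathbf{x})=\Phi_\tau(\mathbf{x})-\Phi_\tau(\mathbf{0})$.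 *)

theory Defs
  imports "HOL-Analysis.Analysis" "HOL-Probability.Probability" "HOL-Algebra.Group"
    "Jordan_Normal_Form.Schur_Decomposition"
begin

definition mtrace :: "complex mat \<Rightarrow> complex" where
  "mtrace A = (\<Sum>i<dim_row A. A $$ (i,i))"

text \<open>Kronecker (tensor) product; index (i,j) of R tensor A is i * dim A + j.\<close>
definition kron :: "complex mat \<Rightarrow> complex mat \<Rightarrow> complex mat" where
  "kron A B = mat (dim_row A * dim_row B) (dim_col A * dim_col B)
     (\<lambda>(i,j). A $$ (i div dim_row B, j div dim_col B) * B $$ (i mod dim_row B, j mod dim_col B))"

definition hermitian :: "complex mat \<Rightarrow> bool" where
  "hermitian A \<longleftrightarrow> A \<in> carrier_mat (dim_row A) (dim_row A) \<and> mat_adjoint A = A"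

definition psd :: "complex mat \<Rightarrow> bool" where
  "psd A \<longleftrightarrow> A \<in> carrier_mat (dim_row A) (dim_row A) \<and>
     (\<forall>v \<in> carrier_vec (dim_row A).
        Im (conjugate v \<bullet> (A *\<^sub>v v)) = 0 \<and> Re (conjugate v \<bullet> (A *\<^sub>v v)) \<ge> 0)"

definition loewner_le :: "complex mat \<Rightarrow> complex mat \<Rightarrow> bool" where
  "loewner_le A B \<longleftrightarrow> dim_row A = dim_row B \<and> dim_col A = dim_col B \<and> psd (B - A)"

definition is_state :: "nat \<Rightarrow> complex mat \<Rightarrow> bool" where
  "is_state n \<rho> \<longleftrightarrow> \<rho> \<in> carrier_mat n n \<and> psd \<rho> \<and> mtrace \<rho> = 1"

definition unitary_mat :: "nat \<Rightarrow> complex mat \<Rightarrow> bool" where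
  "unitary_mat n U \<longleftrightarrow> U \<in> carrier_mat n n \<and> U * mat_adjoint U = 1\<^sub>m n
     \<and> mat_adjoint U * U = 1\<^sub>m n"

definition vnorm :: "complex vec \<Rightarrow> real" where
  "vnorm v = sqrt (\<Sum>i<dim_vec v. (cmod (v $ i))\<^sup>2)"

definition opnorm :: "complex mat \<Rightarrow> real" where
  "opnorm A = Sup {vnorm (A *\<^sub>v v) | v. v \<in> carrier_vec (dim_col A) \<and> vnorm v = 1}"

definition compact_group :: "('g, 'b) monoid_scheme \<Rightarrow> 'g topology \<Rightarrow> bool" where
  "compact_group G T \<longleftrightarrow> group G \<and> topspace T = carrier G \<and> compact_space T \<and> Hausdorff_space T
     \<and> continuous_map (prod_topology T T) T (\<lambda>(x,y). x \<otimes>\<^bsub>G\<^esub> y)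
     \<and> continuous_map T T (\<lambda>x. inv\<^bsub>G\<^esub> x)"

definition normalized_haar :: "('g, 'b) monoid_scheme \<Rightarrow> 'g topology \<Rightarrow> 'g measure \<Rightarrow> bool" where
  "normalized_haar G T \<mu> \<longleftrightarrow> prob_space \<mu> \<and> space \<mu> = carrier G
     \<and> sets \<mu> = sigma_sets (topspace T) {U. openin T U}
     \<and> (\<forall>g \<in> carrier G. \<forall>E \<in> sets \<mu>. emeasure \<mu> ((\<lambda>h. g \<otimes>\<^bsub>G\<^esub> h) ` E) = emeasure \<mu> E)"

definition unitary_rep :: "('g, 'b) monoid_scheme \<Rightarrow> 'g topology \<Rightarrow> nat \<Rightarrow> ('g \<Rightarrow> complex mat) \<Rightarrow> bool" where
  "unitary_rep G T n U \<longleftrightarrow>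
     (\<forall>g \<in> carrier G. unitary_mat n (U g))
     \<and> (\<forall>g \<in> carrier G. \<forall>h \<in> carrier G. U (g \<otimes>\<^bsub>G\<^esub> h) = U g * U h)
     \<and> (\<forall>i<n. \<forall>j<n. continuous_map T euclidean (\<lambda>g. U g $$ (i,j)))"

definition twirl :: "'g measure \<Rightarrow> ('g \<Rightarrow> complex mat) \<Rightarrow> ('g \<Rightarrow> complex mat) \<Rightarrow> complex mat \<Rightarrow> complex mat" where
  "twirl \<mu> UR UA M = mat (dim_row M) (dim_col M)
     (\<lambda>(i,j). LINT g|\<mu>. (kron (UR g) (UA g) * M * mat_adjoint (kron (UR g) (UA g))) $$ (i,j))"

text \<open>Conditional min-entropy H_min(R|A) of Omega on R tensor A, dim R = dR, dim A = dA.\<close>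
definition Hmin :: "nat \<Rightarrow> nat \<Rightarrow> complex mat \<Rightarrow> real" where
  "Hmin dR dA \<Omega> = - log 2 (Inf {Re (mtrace X) | X. X \<in> carrier_mat dA dA \<and> psd X
                                   \<and> loewner_le \<Omega> (kron (1\<^sub>m dR) X)})"

definition eta :: "nat \<Rightarrow> (nat \<Rightarrow> complex mat) \<Rightarrow> (nat \<Rightarrow> real) \<Rightarrow> complex mat" where
  "eta d X x = mat d d (\<lambda>(i,j). (if i = j then 1 / of_nat d else 0)
                       + (\<Sum>k < d\<^sup>2 - 1. complex_of_real (x k) * X k $$ (i,j)))"

definition Phi :: "'g measure \<Rightarrow> ('g \<Rightarrow> complex mat) \<Rightarrow> ('g \<Rightarrow> complex mat) \<Rightarrow> nat \<Rightarrow> nat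
                    \<Rightarrow> (nat \<Rightarrow> complex mat) \<Rightarrow> complex mat \<Rightarrow> (nat \<Rightarrow> real) \<Rightarrow> real" where
  "Phi \<mu> UR UA d dA X \<tau> x = 2 powr (- Hmin d dA (twirl \<mu> UR UA (kron (eta d X x) \<tau>)))"

definition Phi_tilde :: "'g measure \<Rightarrow> ('g \<Rightarrow> complex mat) \<Rightarrow> ('g \<Rightarrow> complex mat) \<Rightarrow> nat \<Rightarrow> nat
                    \<Rightarrow> (nat \<Rightarrow> complex mat) \<Rightarrow> complex mat \<Rightarrow> (nat \<Rightarrow> real) \<Rightarrow> real" where
  "Phi_tilde \<mu> UR UA d dA X \<tau> x = Phi \<mu> UR UA d dA X \<tau> x - Phi \<mu> UR UA d dA X \<tau> (\<lambda>_. 0)"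

definition state_coeffs :: "nat \<Rightarrow> (nat \<Rightarrow> complex mat) \<Rightarrow> (nat \<Rightarrow> real) set" where
  "state_coeffs d X = {x. is_state d (eta d X x)}"

text \<open>Conditions on the fixed operator basis X_1..X_{d^2-1} (indexed 0..d^2-2).\<close>
definition gen_basis :: "nat \<Rightarrow> (nat \<Rightarrow> complex mat) \<Rightarrow> bool" where
  "gen_basis d X \<longleftrightarrow>
     (\<forall>k < d\<^sup>2 - 1. X k \<in> carrier_mat d d \<and> hermitian (X k) \<and> mtrace (X k) = 0
                     \<and> opnorm (X k) = 1 / real d)
     \<and> (\<forall>k < d\<^sup>2 - 1. \<forall>l < d\<^sup>2 - 1. k \<noteq> l \<longrightarrow> mtrace (mat_adjoint (X k) * X l) = 0)
     \<and> (\<forall>H \<in> carrier_mat d d. hermitian H \<longrightarrow>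
          (\<exists>c0 (c :: nat \<Rightarrow> real). H = mat d d (\<lambda>(i,j). complex_of_real c0 * (if i = j then 1 / of_nat d else 0)
                       + (\<Sum>k < d\<^sup>2 - 1. complex_of_real (c k) * X k $$ (i,j)))))"

end

theory Submission
  imports Defs
begin

(* Write Omega(E) for the twirl of E (x) tau and S for the G-average of U_A(g) tau U_A(g)^*, divided
   by d, so that Omega(1/d) = 1 (x) S. If 1 (x) Z >= Omega(E) for a state E, tracing out R gives
   Z >= S, because conjugation by U_R(g) preserves tr E = 1. Hence the positivity constraint in the
   program 2^(-H_min) = inf tr Z is automatic, and its value is at least tr S = 1/d, with equality
   for E = 1/d. As eta is affine and the twirl is linear,
   Omega(eta(l x)) = l Omega(eta(x)) + (1 - l) (1 (x) S), and for l > 0 the map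
   Z |-> l Z + (1 - l) S is a bijection between the feasible sets of the two programs, so that
   Phi(l x) = l Phi(x) + (1 - l)/d = l Phi(x) + (1 - l) Phi(0). *)

unbundle no vec_syntax
no_notation inner (infix "\<bullet>" 70)

section \<open>Kronecker products\<close>

lemma sum_lessThan_mult:
  "(\<Sum>k<(a::nat)*b. f k) = (\<Sum>p<a. \<Sum>q<b. f (p*b+q))"
proof (induction a)
  case (Suc a)
  have "{..<Suc a * b} = {..<a*b} \<union> {a*b..<a*b+b}" by auto
  then have "(\<Sum>k<Suc a*b. f k) = (\<Sum>k<a*b. f k) + (\<Sum>k\<in>{a*b..<a*b+b}. f k)"
    by (simp add: sum.union_disjoint ivl_disj_int)
  also have "(\<Sum>k\<in>{a*b..<a*b+b}. f k) = (\<Sum>q<b. f (a*b+q))"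
    using sum.atLeastLessThan_shift_0[of f "a*b" "a*b+b"] by (simp add: atLeast0LessThan comp_def)
  finally show ?case using Suc by simp
qed simp

lemma sum_lessThan_mult_block:
  fixes n m :: nat
  assumes "a < n" "\<And>p q. p < n \<Longrightarrow> q < m \<Longrightarrow> p \<noteq> a \<Longrightarrow> f (p*m+q) = 0"
  shows "(\<Sum>i<n*m. f i) = (\<Sum>q<m. f (a*m+q))"
proof -
  have "(\<Sum>i<n*m. f i) = (\<Sum>p<n. \<Sum>q<m. f (p*m+q))"
    by (rule sum_lessThan_mult)
  also have "\<dots> = (\<Sum>q<m. f (a*m+q)) + (\<Sum>p\<in>{..<n}-{a}. \<Sum>q<m. f (p*m+q))"
    using assms(1) by (subst sum.remove[of _ a]) auto
  also have "(\<Sum>p\<in>{..<n}-{a}. \<Sum>q<m. f (p*m+q)) = 0"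
    using assms(2) by (intro sum.neutral ballI) auto
  finally show ?thesis by simp
qed

lemma div_mod_less_mult:
  assumes "(i::nat) < a * c"
  shows "i div c < a" "i mod c < c"
proof -
  show "i div c < a" using assms by (simp add: less_mult_imp_div_less)
  have "c > 0" using assms by (cases c) auto
  then show "i mod c < c" by simp
qed

lemma mult_add_less_mult:
  assumes "(p::nat) < a" "q < c"
  shows "p * c + q < a * c"
proof -
  have "Suc p * c \<le> a * c" using assms by (intro mult_le_mono1) simp
  then show ?thesis using assms by simp
qed

lemma mat_adjoint_dims [simp]:
  "dim_row (mat_adjoint A) = dim_col A" "dim_col (mat_adjoint A) = dim_row A"
  unfolding mat_adjoint_def by simp_all

lemma mat_adjoint_index [simp]:
  "i < dim_col A \<Longrightarrow> j < dim_row A \<Longrightarrow> mat_adjoint A $$ (i,j) = cnj (A $$ (j,i))"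
  unfolding mat_adjoint_def by (simp add: mat_of_rows_index)

lemma mat_adjoint_carrier [simp]: "A \<in> carrier_mat n m \<Longrightarrow> mat_adjoint A \<in> carrier_mat m n"
  unfolding carrier_mat_def by simp

lemma mat_adjoint_adjoint [simp]: "mat_adjoint (mat_adjoint A) = (A :: complex mat)"
  by (rule eq_matI) auto

lemma mat_adjoint_mult:
  fixes A B :: "complex mat"
  assumes "A \<in> carrier_mat n m" "B \<in> carrier_mat m k"
  shows "mat_adjoint (A * B) = mat_adjoint B * mat_adjoint A"
  using assms by (intro eq_matI) (auto simp: scalar_prod_def cnj_sum mult.commute)

lemma kron_dims [simp]:
  "dim_row (kron A B) = dim_row A * dim_row B" "dim_col (kron A B) = dim_col A * dim_col B"
  unfolding kron_def by simp_all

lemma kron_index [simp]: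
  "i < dim_row A * dim_row B \<Longrightarrow> j < dim_col A * dim_col B \<Longrightarrow>
   kron A B $$ (i,j) = A $$ (i div dim_row B, j div dim_col B) * B $$ (i mod dim_row B, j mod dim_col B)"
  unfolding kron_def by simp

lemma kron_carrier [simp]:
  "A \<in> carrier_mat a b \<Longrightarrow> B \<in> carrier_mat c e \<Longrightarrow> kron A B \<in> carrier_mat (a*c) (b*e)"
  unfolding carrier_mat_def by simp

lemma kron_mult:
  assumes "A \<in> carrier_mat a b" "B \<in> carrier_mat c e" "C \<in> carrier_mat b f" "D \<in> carrier_mat e h"
  shows "kron A B * kron C D = kron (A * C) (B * D)"
proof (rule eq_matI)
  fix i j assume "i < dim_row (kron (A * C) (B * D))" "j < dim_col (kron (A * C) (B * D))"
  then have i: "i < a*c" and j: "j < f*h" using assms by auto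
  have "(kron A B * kron C D) $$ (i,j) = (\<Sum>k<b*e. kron A B $$ (i,k) * kron C D $$ (k,j))"
    using assms i j by (simp add: scalar_prod_def atLeast0LessThan)
  also have "\<dots> = (\<Sum>p<b. \<Sum>q<e. kron A B $$ (i,p*e+q) * kron C D $$ (p*e+q,j))"
    by (rule sum_lessThan_mult)
  also have "\<dots> = (\<Sum>p<b. A $$ (i div c, p) * C $$ (p, j div h)) * (\<Sum>q<e. B $$ (i mod c, q) * D $$ (q, j mod h))"
    using assms i j by (simp add: mult_add_less_mult div_mod_less_mult sum_product mult_ac)
  also have "\<dots> = kron (A * C) (B * D) $$ (i,j)"
    using assms i j by (simp add: div_mod_less_mult scalar_prod_def atLeast0LessThan)
  finally show "(kron A B * kron C D) $$ (i,j) = kron (A * C) (B * D) $$ (i,j)" .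
qed (use assms in auto)

lemma kron_adjoint:
  assumes "A \<in> carrier_mat a b" "B \<in> carrier_mat c e"
  shows "mat_adjoint (kron A B) = kron (mat_adjoint A) (mat_adjoint B)"
  by (rule eq_matI) (use assms in \<open>auto simp: div_mod_less_mult\<close>)

lemma kron_one: "kron (1\<^sub>m a) (1\<^sub>m b) = 1\<^sub>m (a*b)"
proof (rule eq_matI)
  fix i j assume "i < dim_row (1\<^sub>m (a*b))" "j < dim_col (1\<^sub>m (a*b))"
  moreover have "(i div b = j div b \<and> i mod b = j mod b) = (i = j)"
    by (metis div_mult_mod_eq)
  ultimately show "kron (1\<^sub>m a) (1\<^sub>m b) $$ (i,j) = 1\<^sub>m (a*b) $$ (i,j)"
    by (auto simp: div_mod_less_mult)
qed auto

lemma kron_lincomb_left: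
  assumes "A \<in> carrier_mat n m" "B \<in> carrier_mat n m"
  shows "kron (a \<cdot>\<^sub>m A + b \<cdot>\<^sub>m B) C = a \<cdot>\<^sub>m kron A C + b \<cdot>\<^sub>m kron B C"
  by (rule eq_matI) (use assms in \<open>auto simp: div_mod_less_mult algebra_simps\<close>)

lemma kron_lincomb_right:
  assumes "A \<in> carrier_mat n m" "B \<in> carrier_mat n m"
  shows "kron C (a \<cdot>\<^sub>m A + b \<cdot>\<^sub>m B) = a \<cdot>\<^sub>m kron C A + b \<cdot>\<^sub>m kron C B"
  by (rule eq_matI) (use assms in \<open>auto simp: div_mod_less_mult algebra_simps\<close>)

lemma kron_smult_left: "kron (a \<cdot>\<^sub>m A) B = kron A (a \<cdot>\<^sub>m B)"
  by (rule eq_matI) (auto simp: div_mod_less_mult)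

lemma kron_smult_right: "kron A (c \<cdot>\<^sub>m B) = c \<cdot>\<^sub>m kron A B"
  by (rule eq_matI) (auto simp: div_mod_less_mult)

section \<open>Positivity, the Loewner order and the partial trace\<close>

lemma quad_form_expand:
  fixes A :: "complex mat"
  assumes "A \<in> carrier_mat n m" "v \<in> carrier_vec n" "u \<in> carrier_vec m"
  shows "conjugate v \<bullet> (A *\<^sub>v u) = (\<Sum>i<n. \<Sum>j<m. cnj (v$i) * A$$(i,j) * u$j)"
  using assms by (simp add: scalar_prod_def atLeast0LessThan sum_distrib_left mult.assoc)

lemma quad_form_adjoint:
  fixes A :: "complex mat"
  assumes A: "A \<in> carrier_mat n m" and v: "v \<in> carrier_vec n" and u: "u \<in> carrier_vec m"
  shows "conjugate v \<bullet> (A *\<^sub>v u) = conjugate (mat_adjoint A *\<^sub>v v) \<bullet> u"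
proof -
  have "conjugate (mat_adjoint A *\<^sub>v v) \<bullet> u = (\<Sum>j<m. \<Sum>i<n. cnj (v$i) * A$$(i,j) * u$j)"
    using assms by (simp add: scalar_prod_def atLeast0LessThan sum_distrib_left sum_distrib_right mult_ac)
  also have "\<dots> = conjugate v \<bullet> (A *\<^sub>v u)"
    by (simp add: quad_form_expand[OF assms] sum.swap[of _ "{..<m}"])
  finally show ?thesis ..
qed

lemma quad_form_add:
  fixes A B :: "complex mat"
  assumes "A \<in> carrier_mat n n" "B \<in> carrier_mat n n" "v \<in> carrier_vec n"
  shows "conjugate v \<bullet> ((A + B) *\<^sub>v v) = conjugate v \<bullet> (A *\<^sub>v v) + conjugate v \<bullet> (B *\<^sub>v v)"
  using assms by (simp add: add_mult_distrib_mat_vec scalar_prod_add_distrib[of _ n])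

lemma quad_form_minus:
  fixes A B :: "complex mat"
  assumes "A \<in> carrier_mat n n" "B \<in> carrier_mat n n" "v \<in> carrier_vec n"
  shows "conjugate v \<bullet> ((A - B) *\<^sub>v v) = conjugate v \<bullet> (A *\<^sub>v v) - conjugate v \<bullet> (B *\<^sub>v v)"
  using assms by (simp add: minus_mult_distrib_mat_vec scalar_prod_minus_distrib[of _ n])

lemma quad_form_smult:
  fixes A :: "complex mat"
  assumes "A \<in> carrier_mat n n" "v \<in> carrier_vec n"
  shows "conjugate v \<bullet> ((c \<cdot>\<^sub>m A) *\<^sub>v v) = c * (conjugate v \<bullet> (A *\<^sub>v v))"
  using assms
  by (simp add: quad_form_expand[of "c \<cdot>\<^sub>m A" n n] quad_form_expand[of A n n] sum_distrib_left mult_ac)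

lemma quad_form_unit_vec:
  fixes A :: "complex mat"
  assumes "A \<in> carrier_mat n n" "b < n"
  shows "conjugate (unit_vec n b) \<bullet> (A *\<^sub>v unit_vec n b) = A $$ (b,b)"
proof -
  have "conjugate (unit_vec n b) \<bullet> (A *\<^sub>v unit_vec n b)
      = (\<Sum>i<n. \<Sum>j<n. if j = b then (if i = b then A $$ (b,b) else 0) else 0)"
    unfolding quad_form_expand[OF assms(1) unit_vec_carrier unit_vec_carrier]
    by (intro sum.cong refl) (auto simp: unit_vec_def)
  then show ?thesis using assms(2) by simp
qed

lemma quad_form_unit_vec_pair:
  fixes A :: "complex mat" and c :: complex
  assumes A: "A \<in> carrier_mat n n" and i: "i < n" and j: "j < n"
  shows "conjugate (unit_vec n i + c \<cdot>\<^sub>v unit_vec n j) \<bullet> (A *\<^sub>v (unit_vec n i + c \<cdot>\<^sub>v unit_vec n j))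
       = A $$ (i,i) + c * A $$ (i,j) + cnj c * A $$ (j,i) + cnj c * c * A $$ (j,j)"
proof -
  have w: "unit_vec n i + c \<cdot>\<^sub>v unit_vec n j \<in> carrier_vec n" by simp
  have "conjugate (unit_vec n i + c \<cdot>\<^sub>v unit_vec n j) \<bullet> (A *\<^sub>v (unit_vec n i + c \<cdot>\<^sub>v unit_vec n j))
    = (\<Sum>k<n. \<Sum>l<n.
      (if l = i then (if k = i then A $$ (i,i) else 0) + (if k = j then cnj c * A $$ (j,i) else 0) else 0)
    + (if l = j then (if k = i then c * A $$ (i,j) else 0) + (if k = j then cnj c * c * A $$ (j,j) else 0) else 0))"
    unfolding quad_form_expand[OF A w w]
    by (intro sum.cong refl) (auto simp: algebra_simps unit_vec_def)
  then show ?thesis using i j by (simp add: sum.distrib)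
qed

lemma conjugate_scalar_prod_self:
  assumes "v \<in> carrier_vec n"
  shows "conjugate v \<bullet> v = complex_of_real (\<Sum>k<n. (cmod (v$k))\<^sup>2)"
proof -
  have "conjugate v \<bullet> v = (\<Sum>k<n. v$k * cnj (v$k))"
    using assms by (simp add: scalar_prod_def atLeast0LessThan mult.commute)
  also have "\<dots> = complex_of_real (\<Sum>k<n. (cmod (v$k))\<^sup>2)"
    by (simp only: of_real_sum complex_norm_square)
  finally show ?thesis .
qed

lemma quad_form_norm_le:
  fixes M :: "complex mat"
  assumes M: "M \<in> carrier_mat n n" and v: "v \<in> carrier_vec n"
  shows "cmod (conjugate v \<bullet> (M *\<^sub>v v)) \<le> (\<Sum>i<n. \<Sum>j<n. cmod (M$$(i,j))) * (\<Sum>k<n. (cmod (v$k))\<^sup>2)"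
proof -
  define s where "s = (\<Sum>k<n. (cmod (v$k))\<^sup>2)"
  have v_le: "cmod (v$i) * cmod (v$j) \<le> s" if "i < n" "j < n" for i j
  proof -
    have "(cmod (v$i))\<^sup>2 \<le> s" "(cmod (v$j))\<^sup>2 \<le> s"
      unfolding s_def using that by (auto intro: member_le_sum)
    moreover have "2 * (cmod (v$i) * cmod (v$j)) \<le> (cmod (v$i))\<^sup>2 + (cmod (v$j))\<^sup>2"
      using sum_squares_bound[of "cmod (v$i)" "cmod (v$j)"] by (simp add: power2_eq_square mult_ac)
    ultimately show ?thesis by linarith
  qed
  have "cmod (conjugate v \<bullet> (M *\<^sub>v v)) \<le> (\<Sum>i<n. \<Sum>j<n. cmod (cnj (v$i) * M$$(i,j) * v$j))"
    unfolding quad_form_expand[OF M v v] by (rule order_trans[OF norm_sum sum_mono[OF norm_sum]])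
  also have "\<dots> \<le> (\<Sum>i<n. \<Sum>j<n. cmod (M$$(i,j)) * s)"
  proof (intro sum_mono)
    fix i j assume "i \<in> {..<n}" "j \<in> {..<n}"
    then have "cmod (M$$(i,j)) * (cmod (v$i) * cmod (v$j)) \<le> cmod (M$$(i,j)) * s"
      using v_le by (intro mult_left_mono) auto
    then show "cmod (cnj (v$i) * M$$(i,j) * v$j) \<le> cmod (M$$(i,j)) * s"
      by (simp add: norm_mult mult_ac)
  qed
  finally show ?thesis unfolding s_def by (simp add: sum_distrib_right)
qed

lemma psdI:
  assumes "A \<in> carrier_mat n n"
    and "\<And>v. v \<in> carrier_vec n \<Longrightarrow> Im (conjugate v \<bullet> (A *\<^sub>v v)) = 0 \<and> Re (conjugate v \<bullet> (A *\<^sub>v v)) \<ge> 0"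
  shows "psd A"
  using assms unfolding psd_def by auto

lemma psdD:
  assumes "psd A" "A \<in> carrier_mat n n" "v \<in> carrier_vec n"
  shows "Im (conjugate v \<bullet> (A *\<^sub>v v)) = 0" "Re (conjugate v \<bullet> (A *\<^sub>v v)) \<ge> 0"
  using assms unfolding psd_def by auto

lemma psd_add:
  assumes "A \<in> carrier_mat n n" "B \<in> carrier_mat n n" "psd A" "psd B"
  shows "psd (A + B)"
  by (rule psdI[of _ n]) (use assms in \<open>auto simp: quad_form_add psdD\<close>)

lemma psd_smult_iff:
  assumes "A \<in> carrier_mat n n" "c > 0"
  shows "psd (complex_of_real c \<cdot>\<^sub>m A) \<longleftrightarrow> psd A"
  using assms unfolding psd_def by (auto simp: quad_form_smult zero_le_mult_iff)

lemma psd_imp_hermitian: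
  assumes "psd A"
  shows "hermitian A"
proof -
  obtain n where A: "A \<in> carrier_mat n n" using assms unfolding psd_def by blast
  have adj: "A $$ (i,j) = cnj (A $$ (j,i))" if i: "i < n" and j: "j < n" for i j
  proof -
    have Im_pair: "Im (A $$ (i,i) + c * A $$ (i,j) + cnj c * A $$ (j,i) + cnj c * c * A $$ (j,j)) = 0" for c
      using psdD(1)[OF assms A, of "unit_vec n i + c \<cdot>\<^sub>v unit_vec n j"]
      unfolding quad_form_unit_vec_pair[OF A i j] by simp
    have "Im (A $$ (i,i)) = 0" "Im (A $$ (j,j)) = 0"
      using psdD(1)[OF assms A unit_vec_carrier, of i] psdD(1)[OF assms A unit_vec_carrier, of j]
      unfolding quad_form_unit_vec[OF A i] quad_form_unit_vec[OF A j] .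
    with Im_pair[of 1] Im_pair[of \<i>] show ?thesis by (simp add: complex_eq_iff)
  qed
  have "mat_adjoint A = A"
  proof (rule eq_matI)
    fix i j assume "i < dim_row A" "j < dim_col A"
    then show "mat_adjoint A $$ (i,j) = A $$ (i,j)" using A adj[of i j] by simp
  qed (use A in auto)
  then show ?thesis using A unfolding hermitian_def carrier_mat_def by simp
qed

lemma hermitian_quad_form_real:
  fixes A :: "complex mat"
  assumes "hermitian A" "A \<in> carrier_mat n n" "v \<in> carrier_vec n"
  shows "Im (conjugate v \<bullet> (A *\<^sub>v v)) = 0"
proof -
  have "conjugate v \<bullet> (A *\<^sub>v v) = conjugate (A *\<^sub>v v) \<bullet> v"
    using assms quad_form_adjoint[of A n n v v] unfolding hermitian_def by simp
  also have "\<dots> = cnj (conjugate v \<bullet> (A *\<^sub>v v))"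
    using assms conjugate_vec_sprod_comm[of v n "A *\<^sub>v v"]
      conjugate_conjugate_sprod[of v n "A *\<^sub>v v"] by simp
  finally show ?thesis by (metis cnj.sel(2) neg_equal_zero)
qed

lemma hermitian_kron:
  assumes "hermitian A" "hermitian B"
  shows "hermitian (kron A B)"
proof -
  have A: "A \<in> carrier_mat (dim_row A) (dim_row A)" and B: "B \<in> carrier_mat (dim_row B) (dim_row B)"
    using assms unfolding hermitian_def by auto
  show ?thesis
    using assms kron_adjoint[OF A B] kron_carrier[OF A B] unfolding hermitian_def by simp
qed

lemma mult_mult_adjoint_index:
  fixes A M :: "complex mat"
  assumes "A \<in> carrier_mat n m" "M \<in> carrier_mat m m" "i < n" "j < n"
  shows "(A * M * mat_adjoint A) $$ (i,j) = (\<Sum>k<m. \<Sum>l<m. A$$(i,k) * M$$(k,l) * cnj (A$$(j,l)))"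
proof -
  have "(A * M * mat_adjoint A) $$ (i,j) = (\<Sum>l<m. \<Sum>k<m. A$$(i,k) * M$$(k,l) * cnj (A$$(j,l)))"
    using assms by (simp add: scalar_prod_def atLeast0LessThan sum_distrib_right)
  also have "\<dots> = (\<Sum>k<m. \<Sum>l<m. A$$(i,k) * M$$(k,l) * cnj (A$$(j,l)))"
    by (rule sum.swap)
  finally show ?thesis .
qed

lemma sandwich_carrier:
  "K \<in> carrier_mat m n \<Longrightarrow> M \<in> carrier_mat n n \<Longrightarrow> K * M * mat_adjoint K \<in> carrier_mat m m"
  by (metis mat_adjoint_carrier mult_carrier_mat)

lemma sandwich_lincomb:
  fixes K A B :: "complex mat"
  assumes K: "K \<in> carrier_mat n n" and A: "A \<in> carrier_mat n n" and B: "B \<in> carrier_mat n n"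
  shows "K * (a \<cdot>\<^sub>m A + b \<cdot>\<^sub>m B) * mat_adjoint K
       = a \<cdot>\<^sub>m (K * A * mat_adjoint K) + b \<cdot>\<^sub>m (K * B * mat_adjoint K)"
proof -
  have KA: "K * A \<in> carrier_mat n n" and KB: "K * B \<in> carrier_mat n n" using K A B by auto
  have "K * (a \<cdot>\<^sub>m A + b \<cdot>\<^sub>m B) = K * (a \<cdot>\<^sub>m A) + K * (b \<cdot>\<^sub>m B)"
    by (rule mult_add_distrib_mat[OF K smult_carrier_mat[OF A] smult_carrier_mat[OF B]])
  also have "\<dots> = a \<cdot>\<^sub>m (K * A) + b \<cdot>\<^sub>m (K * B)"
    by (simp add: mult_smult_distrib[OF K A] mult_smult_distrib[OF K B])
  finally have "K * (a \<cdot>\<^sub>m A + b \<cdot>\<^sub>m B) * mat_adjoint K = (a \<cdot>\<^sub>m (K * A) + b \<cdot>\<^sub>m (K * B)) * mat_adjoint K"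
    by simp
  also have "\<dots> = (a \<cdot>\<^sub>m (K * A)) * mat_adjoint K + (b \<cdot>\<^sub>m (K * B)) * mat_adjoint K"
    by (rule add_mult_distrib_mat[OF smult_carrier_mat[OF KA] smult_carrier_mat[OF KB] mat_adjoint_carrier[OF K]])
  also have "\<dots> = a \<cdot>\<^sub>m (K * A * mat_adjoint K) + b \<cdot>\<^sub>m (K * B * mat_adjoint K)"
    using mult_smult_assoc_mat[OF KA mat_adjoint_carrier[OF K]] mult_smult_assoc_mat[OF KB mat_adjoint_carrier[OF K]]
    by simp
  finally show ?thesis .
qed

lemma hermitian_sandwich:
  fixes K M :: "complex mat"
  assumes "hermitian M" "M \<in> carrier_mat n n" "K \<in> carrier_mat m n"
  shows "hermitian (K * M * mat_adjoint K)"
proof -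
  have "mat_adjoint (K * M * mat_adjoint K) = mat_adjoint (mat_adjoint K) * mat_adjoint (K * M)"
    using assms by (intro mat_adjoint_mult[of _ m n]) auto
  also have "\<dots> = K * (M * mat_adjoint K)"
    using assms unfolding hermitian_def by (simp add: mat_adjoint_mult[of K m n])
  also have "\<dots> = K * M * mat_adjoint K"
    using assms by (simp add: assoc_mult_mat[of K m n M n _ m])
  finally show ?thesis
    using sandwich_carrier[OF assms(3,2)] carrier_matD[OF assms(3)] unfolding hermitian_def by simp
qed

lemma psd_sandwich:
  fixes K M :: "complex mat"
  assumes M: "psd M" "M \<in> carrier_mat n n" and K: "K \<in> carrier_mat m n"
  shows "psd (K * M * mat_adjoint K)"
proof (rule psdI[of _ m])
  show "K * M * mat_adjoint K \<in> carrier_mat m m" by (rule sandwich_carrier[OF K M(2)])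
  fix v :: "complex vec" assume v: "v \<in> carrier_vec m"
  define u where "u = mat_adjoint K *\<^sub>v v"
  have u: "u \<in> carrier_vec n" unfolding u_def by (rule mult_mat_vec_carrier[OF mat_adjoint_carrier[OF K] v])
  have "(K * M * mat_adjoint K) *\<^sub>v v = (K * M) *\<^sub>v u"
    unfolding u_def by (rule assoc_mult_mat_vec[OF mult_carrier_mat[OF K M(2)] mat_adjoint_carrier[OF K] v])
  also have "\<dots> = K *\<^sub>v (M *\<^sub>v u)" by (rule assoc_mult_mat_vec[OF K M(2) u])
  finally have "conjugate v \<bullet> ((K * M * mat_adjoint K) *\<^sub>v v) = conjugate v \<bullet> (K *\<^sub>v (M *\<^sub>v u))"
    by simp
  also have "\<dots> = conjugate u \<bullet> (M *\<^sub>v u)"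
    using quad_form_adjoint[OF K v mult_mat_vec_carrier[OF M(2) u]] unfolding u_def .
  finally show "Im (conjugate v \<bullet> ((K * M * mat_adjoint K) *\<^sub>v v)) = 0 \<and>
      Re (conjugate v \<bullet> ((K * M * mat_adjoint K) *\<^sub>v v)) \<ge> 0"
    using psdD[OF M u] by simp
qed

lemma mtrace_add: "A \<in> carrier_mat n n \<Longrightarrow> B \<in> carrier_mat n n \<Longrightarrow> mtrace (A + B) = mtrace A + mtrace B"
  unfolding mtrace_def by (simp add: sum.distrib)

lemma mtrace_minus: "A \<in> carrier_mat n n \<Longrightarrow> B \<in> carrier_mat n n \<Longrightarrow> mtrace (A - B) = mtrace A - mtrace B"
  unfolding mtrace_def by (simp add: sum_subtractf)

lemma mtrace_smult: "A \<in> carrier_mat n n \<Longrightarrow> mtrace (c \<cdot>\<^sub>m A) = c * mtrace A"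
  unfolding mtrace_def by (simp add: sum_distrib_left)

lemma mtrace_one: "mtrace (1\<^sub>m n) = of_nat n"
  unfolding mtrace_def by simp

lemma mtrace_mult_comm:
  assumes "A \<in> carrier_mat n m" "B \<in> carrier_mat m n"
  shows "mtrace (A * B) = mtrace (B * A)"
proof -
  have "mtrace (A * B) = (\<Sum>i<n. \<Sum>k<m. A $$ (i,k) * B $$ (k,i))"
    using assms unfolding mtrace_def by (simp add: scalar_prod_def atLeast0LessThan)
  also have "\<dots> = (\<Sum>k<m. \<Sum>i<n. B $$ (k,i) * A $$ (i,k))"
    by (subst sum.swap) (simp add: mult.commute)
  also have "\<dots> = mtrace (B * A)"
    using assms unfolding mtrace_def by (simp add: scalar_prod_def atLeast0LessThan)
  finally show ?thesis .
qed

lemma mtrace_unitary_conj: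
  assumes "unitary_mat n U" "E \<in> carrier_mat n n"
  shows "mtrace (U * E * mat_adjoint U) = mtrace E"
proof -
  have U: "U \<in> carrier_mat n n" "mat_adjoint U * U = 1\<^sub>m n"
    using assms(1) unfolding unitary_mat_def by auto
  have "mtrace (U * E * mat_adjoint U) = mtrace (mat_adjoint U * (U * E))"
    using U assms(2) by (intro mtrace_mult_comm) auto
  also have "mat_adjoint U * (U * E) = (mat_adjoint U * U) * E"
    using U assms(2) by (intro assoc_mult_mat[symmetric]) auto
  also have "\<dots> = E" using U assms(2) by simp
  finally show ?thesis .
qed

lemma Re_mtrace_psd_nonneg:
  assumes "psd A" "A \<in> carrier_mat n n"
  shows "Re (mtrace A) \<ge> 0"
proof -
  have "Re (A $$ (b,b)) \<ge> 0" if "b < n" for b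
    using psdD(2)[OF assms unit_vec_carrier, of b] unfolding quad_form_unit_vec[OF assms(2) that] .
  then show ?thesis unfolding mtrace_def using assms(2) by (auto simp: Re_sum intro: sum_nonneg)
qed

lemma loewner_le_carrier: "loewner_le A B \<Longrightarrow> A \<in> carrier_mat n m \<Longrightarrow> B \<in> carrier_mat n m"
  unfolding loewner_le_def carrier_mat_def by simp

lemma loewner_le_refl:
  assumes "A \<in> carrier_mat n n"
  shows "loewner_le A A"
proof -
  have "conjugate v \<bullet> ((A - A) *\<^sub>v v) = 0" if "v \<in> carrier_vec n" for v
    using quad_form_minus[OF assms assms that] by simp
  then have "psd (A - A)" using assms by (intro psdI[of _ n]) auto
  then show ?thesis unfolding loewner_le_def by simp
qed

lemma loewner_le_affine_iff:
  assumes "A \<in> carrier_mat n n" "B \<in> carrier_mat n n" "C \<in> carrier_mat n n" "l > 0"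
  shows "loewner_le (complex_of_real l \<cdot>\<^sub>m A + C) (complex_of_real l \<cdot>\<^sub>m B + C) \<longleftrightarrow> loewner_le A B"
proof -
  have "(complex_of_real l \<cdot>\<^sub>m B + C) - (complex_of_real l \<cdot>\<^sub>m A + C) = complex_of_real l \<cdot>\<^sub>m (B - A)"
    using assms by (intro eq_matI) (auto simp: right_diff_distrib)
  moreover have "psd (complex_of_real l \<cdot>\<^sub>m (B - A)) \<longleftrightarrow> psd (B - A)"
    using assms by (intro psd_smult_iff[of _ n]) auto
  ultimately show ?thesis using assms unfolding loewner_le_def by simp
qed

lemma psd_loewner_le_trans:
  assumes "psd A" "loewner_le A B" "A \<in> carrier_mat n n"
  shows "psd B"
proof -
  have B: "B \<in> carrier_mat n n" by (rule loewner_le_carrier[OF assms(2,3)])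
  have "B = A + (B - A)" using B assms(3) by (intro eq_matI) auto
  moreover have "psd (A + (B - A))"
    using assms B unfolding loewner_le_def by (intro psd_add[of _ n]) auto
  ultimately show ?thesis by simp
qed

lemma loewner_le_Re_mtrace:
  assumes "loewner_le A B" "A \<in> carrier_mat n n"
  shows "Re (mtrace A) \<le> Re (mtrace B)"
proof -
  have B: "B \<in> carrier_mat n n" by (rule loewner_le_carrier[OF assms])
  have "Re (mtrace (B - A)) \<ge> 0"
    using assms B unfolding loewner_le_def by (intro Re_mtrace_psd_nonneg[of _ n]) auto
  then show ?thesis using mtrace_minus[OF B assms(2)] by simp
qed

lemma hermitian_loewner_bounded:
  fixes M :: "complex mat"
  assumes "hermitian M" "M \<in> carrier_mat n n"
  shows "\<exists>c. loewner_le M (complex_of_real c \<cdot>\<^sub>m 1\<^sub>m n)"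
proof
  define c where "c = (\<Sum>i<n. \<Sum>j<n. cmod (M$$(i,j)))"
  have "psd (complex_of_real c \<cdot>\<^sub>m 1\<^sub>m n - M)"
  proof (rule psdI[of _ n])
    fix v :: "complex vec" assume v: "v \<in> carrier_vec n"
    have "Re (conjugate v \<bullet> (M *\<^sub>v v)) \<le> c * (\<Sum>k<n. (cmod (v$k))\<^sup>2)"
      using order_trans[OF complex_Re_le_cmod quad_form_norm_le[OF assms(2) v]] unfolding c_def .
    then show "Im (conjugate v \<bullet> ((complex_of_real c \<cdot>\<^sub>m 1\<^sub>m n - M) *\<^sub>v v)) = 0 \<and>
        Re (conjugate v \<bullet> ((complex_of_real c \<cdot>\<^sub>m 1\<^sub>m n - M) *\<^sub>v v)) \<ge> 0"
      using assms v hermitian_quad_form_real[OF assms v]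
      by (simp add: quad_form_minus[of _ n] quad_form_smult[of _ n] conjugate_scalar_prod_self)
  qed (use assms(2) in auto)
  then show "loewner_le M (complex_of_real c \<cdot>\<^sub>m 1\<^sub>m n)"
    using assms(2) unfolding loewner_le_def by simp
qed

definition partial_trace_fst :: "nat \<Rightarrow> nat \<Rightarrow> complex mat \<Rightarrow> complex mat" where
  "partial_trace_fst dR dA M = mat dA dA (\<lambda>(b,b'). \<Sum>a<dR. M $$ (a*dA+b, a*dA+b'))"

lemma partial_trace_fst_dims [simp]:
  "dim_row (partial_trace_fst dR dA M) = dA" "dim_col (partial_trace_fst dR dA M) = dA"
  unfolding partial_trace_fst_def by simp_all

lemma partial_trace_fst_carrier [simp]: "partial_trace_fst dR dA M \<in> carrier_mat dA dA"
  unfolding carrier_mat_def by simp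

lemma partial_trace_fst_index [simp]:
  "b < dA \<Longrightarrow> b' < dA \<Longrightarrow> partial_trace_fst dR dA M $$ (b,b') = (\<Sum>a<dR. M $$ (a*dA+b, a*dA+b'))"
  unfolding partial_trace_fst_def by simp

lemma partial_trace_fst_kron:
  assumes "A \<in> carrier_mat dR dR" "B \<in> carrier_mat dA dA"
  shows "partial_trace_fst dR dA (kron A B) = mtrace A \<cdot>\<^sub>m B"
  by (rule eq_matI) (use assms in \<open>auto simp: mult_add_less_mult mtrace_def sum_distrib_right\<close>)

lemma partial_trace_fst_minus:
  assumes "A \<in> carrier_mat (dR*dA) (dR*dA)" "B \<in> carrier_mat (dR*dA) (dR*dA)"
  shows "partial_trace_fst dR dA (A - B) = partial_trace_fst dR dA A - partial_trace_fst dR dA B"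
  by (rule eq_matI) (use assms in \<open>auto simp: mult_add_less_mult sum_subtractf\<close>)

lemma quad_form_partial_trace_fst:
  fixes M :: "complex mat"
  assumes M: "M \<in> carrier_mat (dR*dA) (dR*dA)" and w: "w \<in> carrier_vec dA"
  defines "lift a \<equiv> vec (dR*dA) (\<lambda>i. if i div dA = a then w $ (i mod dA) else 0)" \<comment> \<open>e_a (x) w\<close>
  shows "conjugate w \<bullet> (partial_trace_fst dR dA M *\<^sub>v w) = (\<Sum>a<dR. conjugate (lift a) \<bullet> (M *\<^sub>v lift a))"
proof -
  have lift: "lift a \<in> carrier_vec (dR*dA)" for a unfolding lift_def by simp
  have lift_index: "lift a $ (p*dA+q) = (if p = a then w$q else 0)" if "p < dR" "q < dA" for a p q
    unfolding lift_def using that by (simp add: mult_add_less_mult)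
  have "conjugate (lift a) \<bullet> (M *\<^sub>v lift a) = (\<Sum>q<dA. \<Sum>q'<dA. cnj (w$q) * M$$(a*dA+q, a*dA+q') * w$q')"
    if a: "a < dR" for a
  proof -
    have "conjugate (lift a) \<bullet> (M *\<^sub>v lift a)
        = (\<Sum>q<dA. \<Sum>j<dR*dA. cnj (lift a $ (a*dA+q)) * M$$(a*dA+q,j) * lift a $ j)"
      unfolding quad_form_expand[OF M lift lift] by (rule sum_lessThan_mult_block[OF a]) (simp add: lift_index)
    also have "\<dots> = (\<Sum>q<dA. \<Sum>q'<dA. cnj (lift a $ (a*dA+q)) * M$$(a*dA+q,a*dA+q') * lift a $ (a*dA+q'))"
      by (intro sum.cong refl sum_lessThan_mult_block[OF a]) (simp add: lift_index)
    finally show ?thesis using a by (simp add: lift_index)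
  qed
  then have "(\<Sum>a<dR. conjugate (lift a) \<bullet> (M *\<^sub>v lift a))
      = (\<Sum>q<dA. \<Sum>q'<dA. cnj (w$q) * (\<Sum>a<dR. M$$(a*dA+q, a*dA+q')) * w$q')"
    by (simp add: sum.swap[of _ "{..<dR}"] sum_distrib_left sum_distrib_right)
  also have "\<dots> = conjugate w \<bullet> (partial_trace_fst dR dA M *\<^sub>v w)"
    by (simp add: quad_form_expand[OF partial_trace_fst_carrier w w])
  finally show ?thesis ..
qed

lemma psd_partial_trace_fst:
  assumes "psd M" "M \<in> carrier_mat (dR*dA) (dR*dA)"
  shows "psd (partial_trace_fst dR dA M)"
proof (rule psdI[OF partial_trace_fst_carrier])
  fix w :: "complex vec" assume w: "w \<in> carrier_vec dA"
  show "Im (conjugate w \<bullet> (partial_trace_fst dR dA M *\<^sub>v w)) = 0 \<and>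
      Re (conjugate w \<bullet> (partial_trace_fst dR dA M *\<^sub>v w)) \<ge> 0"
    using psdD[OF assms]
    by (auto simp: quad_form_partial_trace_fst[OF assms(2) w] Im_sum Re_sum intro!: sum_nonneg)
qed

lemma loewner_le_partial_trace_fst:
  assumes "loewner_le A B" "A \<in> carrier_mat (dR*dA) (dR*dA)"
  shows "loewner_le (partial_trace_fst dR dA A) (partial_trace_fst dR dA B)"
proof -
  have B: "B \<in> carrier_mat (dR*dA) (dR*dA)" by (rule loewner_le_carrier[OF assms])
  have "psd (partial_trace_fst dR dA (B - A))"
    using assms B unfolding loewner_le_def by (intro psd_partial_trace_fst) auto
  then show ?thesis unfolding loewner_le_def partial_trace_fst_minus[OF B assms(2)] by simp
qed

section \<open>The semidefinite program of the conditional min-entropy\<close>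

definition dominating_traces :: "nat \<Rightarrow> nat \<Rightarrow> complex mat \<Rightarrow> real set" where
  "dominating_traces dR dA \<Omega> =
     {Re (mtrace Z) | Z. Z \<in> carrier_mat dA dA \<and> loewner_le \<Omega> (kron (1\<^sub>m dR) Z)}"

lemma Hmin_eq_dominating_traces:
  assumes "\<And>Z. Z \<in> carrier_mat dA dA \<Longrightarrow> loewner_le \<Omega> (kron (1\<^sub>m dR) Z) \<Longrightarrow> psd Z"
  shows "Hmin dR dA \<Omega> = - log 2 (Inf (dominating_traces dR dA \<Omega>))"
proof -
  have "{Re (mtrace Z) | Z. Z \<in> carrier_mat dA dA \<and> psd Z \<and> loewner_le \<Omega> (kron (1\<^sub>m dR) Z)}
      = dominating_traces dR dA \<Omega>"
    unfolding dominating_traces_def using assms by blast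
  then show ?thesis unfolding Hmin_def by simp
qed

lemma dominating_traces_nonempty:
  assumes "hermitian \<Omega>" "\<Omega> \<in> carrier_mat (dR*dA) (dR*dA)"
  shows "dominating_traces dR dA \<Omega> \<noteq> {}"
proof -
  obtain c where "loewner_le \<Omega> (complex_of_real c \<cdot>\<^sub>m 1\<^sub>m (dR*dA))"
    using hermitian_loewner_bounded[OF assms] by blast
  then have "loewner_le \<Omega> (kron (1\<^sub>m dR) (complex_of_real c \<cdot>\<^sub>m 1\<^sub>m dA))"
    by (simp only: kron_smult_right kron_one)
  moreover have "complex_of_real c \<cdot>\<^sub>m 1\<^sub>m dA \<in> carrier_mat dA dA" by simp
  ultimately show ?thesis unfolding dominating_traces_def by blast
qed

lemma affine_mat_inverse:
  fixes Z S :: "complex mat"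
  assumes "Z \<in> carrier_mat n m" "S \<in> carrier_mat n m" "l \<noteq> 0"
  shows "complex_of_real l \<cdot>\<^sub>m (complex_of_real (1 / l) \<cdot>\<^sub>m (Z - complex_of_real (1 - l) \<cdot>\<^sub>m S))
       + complex_of_real (1 - l) \<cdot>\<^sub>m S = Z"
proof -
  have "complex_of_real l \<noteq> 0" using assms(3) by simp
  then show ?thesis using assms(1,2) by (intro eq_matI) (auto simp: field_simps)
qed

lemma loewner_le_kron_affine_iff:
  assumes "\<Omega> \<in> carrier_mat (dR*dA) (dR*dA)" "S \<in> carrier_mat dA dA" "Z \<in> carrier_mat dA dA" "l > 0"
  shows "loewner_le (complex_of_real l \<cdot>\<^sub>m \<Omega> + complex_of_real (1 - l) \<cdot>\<^sub>m kron (1\<^sub>m dR) S)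
           (kron (1\<^sub>m dR) (complex_of_real l \<cdot>\<^sub>m Z + complex_of_real (1 - l) \<cdot>\<^sub>m S))
       \<longleftrightarrow> loewner_le \<Omega> (kron (1\<^sub>m dR) Z)"
  unfolding kron_lincomb_right[OF assms(3,2)] by (rule loewner_le_affine_iff) (use assms in auto)

lemma dominating_traces_affine:
  assumes \<Omega>: "\<Omega> \<in> carrier_mat (dR*dA) (dR*dA)" and S: "S \<in> carrier_mat dA dA" and l: "l > 0"
  shows "dominating_traces dR dA (complex_of_real l \<cdot>\<^sub>m \<Omega> + complex_of_real (1 - l) \<cdot>\<^sub>m kron (1\<^sub>m dR) S)
       = (\<lambda>t. l * t + (1 - l) * Re (mtrace S)) ` dominating_traces dR dA \<Omega>"
    (is "dominating_traces dR dA ?\<Omega>' = ?g ` dominating_traces dR dA \<Omega>")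
proof -
  let ?f = "\<lambda>Z. complex_of_real l \<cdot>\<^sub>m Z + complex_of_real (1 - l) \<cdot>\<^sub>m S"
  have f_trace: "Re (mtrace (?f Z)) = ?g (Re (mtrace Z))" if "Z \<in> carrier_mat dA dA" for Z
    using that S by (simp add: mtrace_add[of _ dA] mtrace_smult[of _ dA])
  show ?thesis
  proof (intro equalityI subsetI)
    fix t assume "t \<in> dominating_traces dR dA ?\<Omega>'"
    then obtain Z' where Z': "Z' \<in> carrier_mat dA dA" "loewner_le ?\<Omega>' (kron (1\<^sub>m dR) Z')"
      and t: "t = Re (mtrace Z')"
      unfolding dominating_traces_def by blast
    define Z where "Z = complex_of_real (1 / l) \<cdot>\<^sub>m (Z' - complex_of_real (1 - l) \<cdot>\<^sub>m S)"
    have Z: "Z \<in> carrier_mat dA dA" unfolding Z_def using S by (simp add: minus_carrier_mat)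
    have "?f Z = Z'" unfolding Z_def using Z'(1) S l by (intro affine_mat_inverse) auto
    then have "loewner_le \<Omega> (kron (1\<^sub>m dR) Z)" and "t = ?g (Re (mtrace Z))"
      using Z'(2) t loewner_le_kron_affine_iff[OF \<Omega> S Z l] f_trace[OF Z] by simp_all
    with Z show "t \<in> ?g ` dominating_traces dR dA \<Omega>"
      unfolding dominating_traces_def by blast
  next
    fix t assume "t \<in> ?g ` dominating_traces dR dA \<Omega>"
    then obtain Z where Z: "Z \<in> carrier_mat dA dA" "loewner_le \<Omega> (kron (1\<^sub>m dR) Z)"
      and t: "t = ?g (Re (mtrace Z))"
      unfolding dominating_traces_def by blast
    have "?f Z \<in> carrier_mat dA dA" using Z(1) S by simp
    moreover have "loewner_le ?\<Omega>' (kron (1\<^sub>m dR) (?f Z))"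
      using loewner_le_kron_affine_iff[OF \<Omega> S Z(1) l] Z(2) by simp
    moreover have "t = Re (mtrace (?f Z))" using t f_trace[OF Z(1)] by simp
    ultimately show "t \<in> dominating_traces dR dA ?\<Omega>'"
      unfolding dominating_traces_def by blast
  qed
qed

lemma Inf_affine_image:
  fixes A :: "real set"
  assumes "A \<noteq> {}" "bdd_below A" "l > 0"
  shows "Inf ((\<lambda>t. l * t + c) ` A) = l * Inf A + c"
proof -
  have "mono (\<lambda>t. l * t + c)" using assms(3) by (intro monoI) simp
  moreover have "continuous (at_right (Inf A)) (\<lambda>t. l * t + c)" by (intro continuous_intros)
  ultimately have "(\<lambda>t. l * t + c) (Inf A) = Inf ((\<lambda>t. l * t + c) ` A)"
    using assms(1,2) by (rule continuous_at_Inf_mono)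
  then show ?thesis by simp
qed

section \<open>Entrywise integrals of matrix-valued functions\<close>

definition mat_integral :: "'a measure \<Rightarrow> nat \<Rightarrow> nat \<Rightarrow> ('a \<Rightarrow> complex mat) \<Rightarrow> complex mat" where
  "mat_integral \<mu> n m F = mat n m (\<lambda>(i,j). LINT g|\<mu>. F g $$ (i,j))"

lemma mat_integral_dims [simp]:
  "dim_row (mat_integral \<mu> n m F) = n" "dim_col (mat_integral \<mu> n m F) = m"
  unfolding mat_integral_def by simp_all

lemma mat_integral_carrier [simp]: "mat_integral \<mu> n m F \<in> carrier_mat n m"
  unfolding carrier_mat_def by simp

lemma mat_integral_index [simp]:
  "i < n \<Longrightarrow> j < m \<Longrightarrow> mat_integral \<mu> n m F $$ (i,j) = (LINT g|\<mu>. F g $$ (i,j))"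
  unfolding mat_integral_def by simp

lemma mat_integral_cong:
  "(\<And>g. g \<in> space \<mu> \<Longrightarrow> F g = G g) \<Longrightarrow> mat_integral \<mu> n m F = mat_integral \<mu> n m G"
  unfolding mat_integral_def by (rule cong_mat) (auto intro!: Bochner_Integration.integral_cong)

lemma mat_integral_lincomb:
  assumes "\<And>g. g \<in> space \<mu> \<Longrightarrow> F g \<in> carrier_mat n m" "\<And>g. g \<in> space \<mu> \<Longrightarrow> G g \<in> carrier_mat n m"
    and "\<And>i j. i < n \<Longrightarrow> j < m \<Longrightarrow> integrable \<mu> (\<lambda>g. F g $$ (i,j))"
    and "\<And>i j. i < n \<Longrightarrow> j < m \<Longrightarrow> integrable \<mu> (\<lambda>g. G g $$ (i,j))"
  shows "mat_integral \<mu> n m (\<lambda>g. a \<cdot>\<^sub>m F g + b \<cdot>\<^sub>m G g)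
       = a \<cdot>\<^sub>m mat_integral \<mu> n m F + b \<cdot>\<^sub>m mat_integral \<mu> n m G"
proof (rule eq_matI)
  fix i j assume "i < dim_row (a \<cdot>\<^sub>m mat_integral \<mu> n m F + b \<cdot>\<^sub>m mat_integral \<mu> n m G)"
    "j < dim_col (a \<cdot>\<^sub>m mat_integral \<mu> n m F + b \<cdot>\<^sub>m mat_integral \<mu> n m G)"
  then have ij: "i < n" "j < m" by auto
  have "(a \<cdot>\<^sub>m F g + b \<cdot>\<^sub>m G g) $$ (i,j) = a * F g $$ (i,j) + b * G g $$ (i,j)" if "g \<in> space \<mu>" for g
    using carrier_matD[OF assms(1)[OF that]] carrier_matD[OF assms(2)[OF that]] ij by simp
  then have "(LINT g|\<mu>. (a \<cdot>\<^sub>m F g + b \<cdot>\<^sub>m G g) $$ (i,j)) = (LINT g|\<mu>. a * F g $$ (i,j) + b * G g $$ (i,j))"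
    by (intro Bochner_Integration.integral_cong) auto
  also have "\<dots> = a * (LINT g|\<mu>. F g $$ (i,j)) + b * (LINT g|\<mu>. G g $$ (i,j))"
    using assms(3,4)[OF ij] by simp
  finally show "mat_integral \<mu> n m (\<lambda>g. a \<cdot>\<^sub>m F g + b \<cdot>\<^sub>m G g) $$ (i,j)
      = (a \<cdot>\<^sub>m mat_integral \<mu> n m F + b \<cdot>\<^sub>m mat_integral \<mu> n m G) $$ (i,j)"
    using ij by simp
qed auto

lemma mat_integral_kron_left:
  assumes "A \<in> carrier_mat a b" "\<And>g. g \<in> space \<mu> \<Longrightarrow> F g \<in> carrier_mat n m"
  shows "mat_integral \<mu> (a*n) (b*m) (\<lambda>g. kron A (F g)) = kron A (mat_integral \<mu> n m F)"
proof (rule eq_matI)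
  fix i j assume "i < dim_row (kron A (mat_integral \<mu> n m F))" "j < dim_col (kron A (mat_integral \<mu> n m F))"
  then have ij: "i < a*n" "j < b*m" using assms(1) by auto
  have "kron A (F g) $$ (i,j) = A $$ (i div n, j div m) * F g $$ (i mod n, j mod m)" if "g \<in> space \<mu>" for g
    using carrier_matD[OF assms(1)] carrier_matD[OF assms(2)[OF that]] ij by simp
  then have "(LINT g|\<mu>. kron A (F g) $$ (i,j)) = (LINT g|\<mu>. A $$ (i div n, j div m) * F g $$ (i mod n, j mod m))"
    by (intro Bochner_Integration.integral_cong) auto
  then show "mat_integral \<mu> (a*n) (b*m) (\<lambda>g. kron A (F g)) $$ (i,j) = kron A (mat_integral \<mu> n m F) $$ (i,j)"
    using assms(1) ij by (simp add: div_mod_less_mult)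
qed (use assms(1) in auto)

lemma partial_trace_fst_mat_integral:
  assumes "\<And>i j. i < dR*dA \<Longrightarrow> j < dR*dA \<Longrightarrow> integrable \<mu> (\<lambda>g. F g $$ (i,j))"
  shows "partial_trace_fst dR dA (mat_integral \<mu> (dR*dA) (dR*dA) F)
       = mat_integral \<mu> dA dA (\<lambda>g. partial_trace_fst dR dA (F g))"
proof (rule eq_matI)
  fix b b' assume "b < dim_row (mat_integral \<mu> dA dA (\<lambda>g. partial_trace_fst dR dA (F g)))"
    "b' < dim_col (mat_integral \<mu> dA dA (\<lambda>g. partial_trace_fst dR dA (F g)))"
  then have b: "b < dA" "b' < dA" by auto
  have "(\<Sum>a<dR. (LINT g|\<mu>. F g $$ (a*dA+b, a*dA+b'))) = (LINT g|\<mu>. (\<Sum>a<dR. F g $$ (a*dA+b, a*dA+b')))"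
    using b by (intro Bochner_Integration.integral_sum[symmetric] assms) (auto simp: mult_add_less_mult)
  then show "partial_trace_fst dR dA (mat_integral \<mu> (dR*dA) (dR*dA) F) $$ (b,b')
      = mat_integral \<mu> dA dA (\<lambda>g. partial_trace_fst dR dA (F g)) $$ (b,b')"
    using b by (simp add: mult_add_less_mult)
qed auto

lemma mtrace_mat_integral:
  assumes "\<And>g. g \<in> space \<mu> \<Longrightarrow> F g \<in> carrier_mat n n" "\<And>i. i < n \<Longrightarrow> integrable \<mu> (\<lambda>g. F g $$ (i,i))"
  shows "mtrace (mat_integral \<mu> n n F) = (LINT g|\<mu>. mtrace (F g))"
proof -
  have "mtrace (mat_integral \<mu> n n F) = (\<Sum>i<n. LINT g|\<mu>. F g $$ (i,i))"
    unfolding mtrace_def by simp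
  also have "\<dots> = (LINT g|\<mu>. (\<Sum>i<n. F g $$ (i,i)))"
    using assms(2) by (intro Bochner_Integration.integral_sum[symmetric]) auto
  also have "\<dots> = (LINT g|\<mu>. mtrace (F g))"
    unfolding mtrace_def using carrier_matD(1)[OF assms(1)] by (intro Bochner_Integration.integral_cong) auto
  finally show ?thesis .
qed

lemma quad_form_mat_integral:
  assumes "\<And>g. g \<in> space \<mu> \<Longrightarrow> F g \<in> carrier_mat n n"
    and "\<And>i j. i < n \<Longrightarrow> j < n \<Longrightarrow> integrable \<mu> (\<lambda>g. F g $$ (i,j))"
    and v: "v \<in> carrier_vec n"
  shows "conjugate v \<bullet> (mat_integral \<mu> n n F *\<^sub>v v) = (LINT g|\<mu>. conjugate v \<bullet> (F g *\<^sub>v v))"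
proof -
  have int: "integrable \<mu> (\<lambda>g. cnj (v$i) * F g $$ (i,j) * v$j)" if "i < n" "j < n" for i j
    using assms(2)[OF that] by simp
  have "conjugate v \<bullet> (mat_integral \<mu> n n F *\<^sub>v v) = (\<Sum>i<n. \<Sum>j<n. (LINT g|\<mu>. cnj (v$i) * F g $$ (i,j) * v$j))"
    by (simp add: quad_form_expand[OF mat_integral_carrier v v])
  also have "\<dots> = (\<Sum>i<n. (LINT g|\<mu>. (\<Sum>j<n. cnj (v$i) * F g $$ (i,j) * v$j)))"
    using int by (intro sum.cong refl Bochner_Integration.integral_sum[symmetric]) auto
  also have "\<dots> = (LINT g|\<mu>. (\<Sum>i<n. \<Sum>j<n. cnj (v$i) * F g $$ (i,j) * v$j))"
    using int by (intro Bochner_Integration.integral_sum[symmetric] integrable_sum) auto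
  also have "\<dots> = (LINT g|\<mu>. conjugate v \<bullet> (F g *\<^sub>v v))"
    using assms(1) by (intro Bochner_Integration.integral_cong) (simp_all add: quad_form_expand[OF _ v v])
  finally show ?thesis .
qed

lemma psd_mat_integral:
  assumes "\<And>g. g \<in> space \<mu> \<Longrightarrow> F g \<in> carrier_mat n n" "\<And>g. g \<in> space \<mu> \<Longrightarrow> psd (F g)"
    and "\<And>i j. i < n \<Longrightarrow> j < n \<Longrightarrow> integrable \<mu> (\<lambda>g. F g $$ (i,j))"
  shows "psd (mat_integral \<mu> n n F)"
proof (rule psdI[OF mat_integral_carrier])
  fix v :: "complex vec" assume v: "v \<in> carrier_vec n"
  have "(LINT g|\<mu>. conjugate v \<bullet> (F g *\<^sub>v v)) = (LINT g|\<mu>. complex_of_real (Re (conjugate v \<bullet> (F g *\<^sub>v v))))"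
    using assms(1,2) psdD(1)[OF _ _ v] by (intro Bochner_Integration.integral_cong) (auto simp: complex_eq_iff)
  moreover have "(LINT g|\<mu>. Re (conjugate v \<bullet> (F g *\<^sub>v v))) \<ge> 0"
    using assms(1,2) psdD(2)[OF _ _ v] by (intro Bochner_Integration.integral_nonneg) auto
  ultimately show "Im (conjugate v \<bullet> (mat_integral \<mu> n n F *\<^sub>v v)) = 0 \<and>
      Re (conjugate v \<bullet> (mat_integral \<mu> n n F *\<^sub>v v)) \<ge> 0"
    using quad_form_mat_integral[OF assms(1,3) v] by simp
qed

lemma hermitian_mat_integral:
  assumes "\<And>g. g \<in> space \<mu> \<Longrightarrow> F g \<in> carrier_mat n n" "\<And>g. g \<in> space \<mu> \<Longrightarrow> hermitian (F g)"
  shows "hermitian (mat_integral \<mu> n n F)"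
proof -
  have "cnj (F g $$ (j,i)) = F g $$ (i,j)" if "g \<in> space \<mu>" "i < n" "j < n" for g i j
  proof -
    have "mat_adjoint (F g) = F g" using assms(2)[OF that(1)] unfolding hermitian_def by simp
    then show ?thesis using assms(1)[OF that(1)] that mat_adjoint_index[of i "F g" j] by simp
  qed
  then have "(LINT g|\<mu>. cnj (F g $$ (j,i))) = (LINT g|\<mu>. F g $$ (i,j))" if "i < n" "j < n" for i j
    using that by (intro Bochner_Integration.integral_cong) auto
  then have "mat_adjoint (mat_integral \<mu> n n F) = mat_integral \<mu> n n F"
    by (intro eq_matI) auto
  then show ?thesis unfolding hermitian_def by simp
qed

lemma continuous_map_complex_mult [continuous_intros]:
  fixes f g :: "'a \<Rightarrow> complex"
  shows "continuous_map X euclidean f \<Longrightarrow> continuous_map X euclidean g \<Longrightarrow>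
    continuous_map X euclidean (\<lambda>x. f x * g x)"
  by (simp add: continuous_map_atin tendsto_mult)

lemma continuous_map_cnj [continuous_intros]:
  fixes f :: "'a \<Rightarrow> complex"
  shows "continuous_map X euclidean f \<Longrightarrow> continuous_map X euclidean (\<lambda>x. cnj (f x))"
  by (simp add: continuous_map_atin tendsto_cnj)

lemma continuous_map_sandwich_index:
  fixes A :: "'a \<Rightarrow> complex mat"
  assumes A: "\<And>x. x \<in> topspace X \<Longrightarrow> A x \<in> carrier_mat n n"
    and A_cont: "\<And>i j. i < n \<Longrightarrow> j < n \<Longrightarrow> continuous_map X euclidean (\<lambda>x. A x $$ (i,j))"
    and M: "M \<in> carrier_mat n n" and ij: "i < n" "j < n"
  shows "continuous_map X euclidean (\<lambda>x. (A x * M * mat_adjoint (A x)) $$ (i,j))"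
proof -
  have "continuous_map X euclidean (\<lambda>x. \<Sum>k<n. \<Sum>l<n. A x $$ (i,k) * M$$(k,l) * cnj (A x $$ (j,l)))"
    using ij by (intro continuous_intros A_cont) auto
  then show ?thesis
    by (rule continuous_map_eq) (simp add: mult_mult_adjoint_index[OF A M ij])
qed

lemma continuous_map_kron_index:
  fixes A B :: "'a \<Rightarrow> complex mat"
  assumes "\<And>x. x \<in> topspace X \<Longrightarrow> A x \<in> carrier_mat n n" "\<And>x. x \<in> topspace X \<Longrightarrow> B x \<in> carrier_mat m m"
    and "\<And>i j. i < n \<Longrightarrow> j < n \<Longrightarrow> continuous_map X euclidean (\<lambda>x. A x $$ (i,j))"
    and "\<And>i j. i < m \<Longrightarrow> j < m \<Longrightarrow> continuous_map X euclidean (\<lambda>x. B x $$ (i,j))"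
    and "i < n * m" "j < n * m"
  shows "continuous_map X euclidean (\<lambda>x. kron (A x) (B x) $$ (i,j))"
proof -
  have "continuous_map X euclidean (\<lambda>x. A x $$ (i div m, j div m) * B x $$ (i mod m, j mod m))"
    using assms(5,6) by (intro continuous_intros assms(3,4)) (auto simp: div_mod_less_mult)
  then show ?thesis
  proof (rule continuous_map_eq)
    fix x assume "x \<in> topspace X"
    then show "A x $$ (i div m, j div m) * B x $$ (i mod m, j mod m) = kron (A x) (B x) $$ (i,j)"
      using carrier_matD[OF assms(1)] carrier_matD[OF assms(2)] assms(5,6) by simp
  qed
qed

section \<open>The maximally mixed state\<close>

definition maximally_mixed :: "nat \<Rightarrow> complex mat" where
  "maximally_mixed n = complex_of_real (1 / real n) \<cdot>\<^sub>m 1\<^sub>m n"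

lemma maximally_mixed_carrier: "maximally_mixed n \<in> carrier_mat n n"
  unfolding maximally_mixed_def by simp

lemma hermitian_maximally_mixed: "hermitian (maximally_mixed n)"
proof -
  have "mat_adjoint (maximally_mixed n) = maximally_mixed n"
    unfolding maximally_mixed_def by (rule eq_matI) auto
  then show ?thesis
    using maximally_mixed_carrier carrier_matD[OF maximally_mixed_carrier] unfolding hermitian_def by simp
qed

lemma mtrace_maximally_mixed: "n \<ge> 1 \<Longrightarrow> mtrace (maximally_mixed n) = 1"
  unfolding maximally_mixed_def by (simp add: mtrace_smult[of _ n] mtrace_one)

lemma unitary_conj_maximally_mixed:
  assumes "unitary_mat n U"
  shows "U * maximally_mixed n * mat_adjoint U = maximally_mixed n"
proof -
  have U: "U \<in> carrier_mat n n" "U * mat_adjoint U = 1\<^sub>m n"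
    using assms unfolding unitary_mat_def by auto
  have "U * maximally_mixed n = complex_of_real (1 / real n) \<cdot>\<^sub>m U"
    unfolding maximally_mixed_def using mult_smult_distrib[OF U(1) one_carrier_mat] U(1) by simp
  then show ?thesis
    using mult_smult_assoc_mat[OF U(1) mat_adjoint_carrier[OF U(1)]] U unfolding maximally_mixed_def by simp
qed

lemma eta_zero: "eta d X (\<lambda>_. 0) = maximally_mixed d"
  unfolding eta_def maximally_mixed_def by (rule eq_matI) auto

lemma eta_scale:
  "eta d X (\<lambda>k. l * x k) = complex_of_real l \<cdot>\<^sub>m eta d X x + complex_of_real (1 - l) \<cdot>\<^sub>m maximally_mixed d"
proof (rule eq_matI)
  fix i j assume "i < dim_row (complex_of_real l \<cdot>\<^sub>m eta d X x + complex_of_real (1 - l) \<cdot>\<^sub>m maximally_mixed d)"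
    "j < dim_col (complex_of_real l \<cdot>\<^sub>m eta d X x + complex_of_real (1 - l) \<cdot>\<^sub>m maximally_mixed d)"
  then have "i < d" "j < d" by (simp_all add: maximally_mixed_def)
  then show "eta d X (\<lambda>k. l * x k) $$ (i,j)
      = (complex_of_real l \<cdot>\<^sub>m eta d X x + complex_of_real (1 - l) \<cdot>\<^sub>m maximally_mixed d) $$ (i,j)"
    unfolding eta_def maximally_mixed_def by (simp add: algebra_simps sum_distrib_left diff_divide_distrib)
qed (simp_all add: eta_def maximally_mixed_def)

lemma state_coeffs_eta:
  assumes "x \<in> state_coeffs d X"
  shows "eta d X x \<in> carrier_mat d d" "hermitian (eta d X x)" "mtrace (eta d X x) = 1"
  using assms psd_imp_hermitian unfolding state_coeffs_def is_state_def by auto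

section \<open>Twirling over a compact group\<close>

locale twirl_setting =
  fixes G :: "('g, 'b) monoid_scheme" and T :: "'g topology" and \<mu> :: "'g measure"
    and UR UA :: "'g \<Rightarrow> complex mat" and d dA :: nat
  assumes compact_group: "compact_group G T"
    and haar: "normalized_haar G T \<mu>"
    and d_pos: "d \<ge> 1"
    and rep_R: "unitary_rep G T d UR"
    and rep_A: "unitary_rep G T dA UA"
begin

lemma space_eq: "space \<mu> = carrier G"
  using haar unfolding normalized_haar_def by auto

lemma topspace_eq: "topspace T = carrier G"
  using compact_group unfolding compact_group_def by auto

lemma integrable_continuous:
  fixes f :: "'g \<Rightarrow> complex"
  assumes f: "continuous_map T euclidean f"
  shows "integrable \<mu> f"
proof -
  interpret prob_space \<mu> using haar unfolding normalized_haar_def by auto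
  have "f \<in> borel_measurable \<mu>"
  proof (rule borel_measurableI)
    fix S :: "complex set" assume "open S"
    then have "openin T {x \<in> topspace T. f x \<in> S}" using openin_continuous_map_preimage[OF f] by simp
    moreover have "f -` S \<inter> space \<mu> = {x \<in> topspace T. f x \<in> S}" using space_eq topspace_eq by auto
    ultimately show "f -` S \<inter> space \<mu> \<in> sets \<mu>"
      using haar unfolding normalized_haar_def by (auto intro: sigma_sets.Basic)
  qed
  moreover have "compactin T (topspace T)"
    using compact_group unfolding compact_group_def compact_space_def by blast
  then have "bounded (f ` topspace T)" using image_compactin[OF _ f] by (simp add: compact_imp_bounded)
  then obtain B where "\<forall>x \<in> topspace T. norm (f x) \<le> B" unfolding bounded_iff by auto
  ultimately show ?thesis
    using space_eq topspace_eq by (intro integrable_const_bound[where B = B] AE_I2) auto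
qed

lemma UR_unitary: "g \<in> carrier G \<Longrightarrow> unitary_mat d (UR g)"
  using rep_R unfolding unitary_rep_def by auto

lemma UA_unitary: "g \<in> carrier G \<Longrightarrow> unitary_mat dA (UA g)"
  using rep_A unfolding unitary_rep_def by auto

lemma UR_carrier: "g \<in> carrier G \<Longrightarrow> UR g \<in> carrier_mat d d"
  using UR_unitary unfolding unitary_mat_def by auto

lemma UA_carrier: "g \<in> carrier G \<Longrightarrow> UA g \<in> carrier_mat dA dA"
  using UA_unitary unfolding unitary_mat_def by auto

lemma continuous_UR_index: "i < d \<Longrightarrow> j < d \<Longrightarrow> continuous_map T euclidean (\<lambda>g. UR g $$ (i,j))"
  using rep_R unfolding unitary_rep_def by auto

lemma continuous_UA_index: "i < dA \<Longrightarrow> j < dA \<Longrightarrow> continuous_map T euclidean (\<lambda>g. UA g $$ (i,j))"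
  using rep_A unfolding unitary_rep_def by auto

abbreviation URA :: "'g \<Rightarrow> complex mat" where
  "URA g \<equiv> kron (UR g) (UA g)"

lemma URA_carrier: "g \<in> carrier G \<Longrightarrow> URA g \<in> carrier_mat (d*dA) (d*dA)"
  using UR_carrier UA_carrier by simp

lemma continuous_URA_index:
  "i < d*dA \<Longrightarrow> j < d*dA \<Longrightarrow> continuous_map T euclidean (\<lambda>g. URA g $$ (i,j))"
  by (rule continuous_map_kron_index[of T UR d UA dA])
    (auto simp: topspace_eq UR_carrier UA_carrier continuous_UR_index continuous_UA_index)

lemma integrable_sandwich_index:
  fixes A :: "'g \<Rightarrow> complex mat"
  assumes "\<And>g. g \<in> carrier G \<Longrightarrow> A g \<in> carrier_mat n n"
    and "\<And>i j. i < n \<Longrightarrow> j < n \<Longrightarrow> continuous_map T euclidean (\<lambda>g. A g $$ (i,j))"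
    and "M \<in> carrier_mat n n" "i < n" "j < n"
  shows "integrable \<mu> (\<lambda>g. (A g * M * mat_adjoint (A g)) $$ (i,j))"
  using assms by (intro integrable_continuous continuous_map_sandwich_index[of T A n]) (auto simp: topspace_eq)

lemma twirl_eq_mat_integral:
  assumes "M \<in> carrier_mat (d*dA) (d*dA)"
  shows "twirl \<mu> UR UA M = mat_integral \<mu> (d*dA) (d*dA) (\<lambda>g. URA g * M * mat_adjoint (URA g))"
  using carrier_matD[OF assms] unfolding twirl_def mat_integral_def by simp

lemma integrable_twirl_index:
  assumes "M \<in> carrier_mat (d*dA) (d*dA)" "i < d*dA" "j < d*dA"
  shows "integrable \<mu> (\<lambda>g. (URA g * M * mat_adjoint (URA g)) $$ (i,j))"
  by (rule integrable_sandwich_index[where A = URA and n = "d*dA"])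
    (use URA_carrier continuous_URA_index assms in auto)

lemma twirl_carrier: "M \<in> carrier_mat (d*dA) (d*dA) \<Longrightarrow> twirl \<mu> UR UA M \<in> carrier_mat (d*dA) (d*dA)"
  by (simp add: twirl_eq_mat_integral)

lemma twirl_lincomb:
  assumes A: "A \<in> carrier_mat (d*dA) (d*dA)" and B: "B \<in> carrier_mat (d*dA) (d*dA)"
  shows "twirl \<mu> UR UA (a \<cdot>\<^sub>m A + b \<cdot>\<^sub>m B) = a \<cdot>\<^sub>m twirl \<mu> UR UA A + b \<cdot>\<^sub>m twirl \<mu> UR UA B"
proof -
  have "twirl \<mu> UR UA (a \<cdot>\<^sub>m A + b \<cdot>\<^sub>m B) = mat_integral \<mu> (d*dA) (d*dA)
      (\<lambda>g. a \<cdot>\<^sub>m (URA g * A * mat_adjoint (URA g)) + b \<cdot>\<^sub>m (URA g * B * mat_adjoint (URA g)))"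
    using A B unfolding twirl_eq_mat_integral[OF add_carrier_mat[OF smult_carrier_mat[OF B]]]
    by (intro mat_integral_cong sandwich_lincomb) (auto simp: space_eq URA_carrier)
  also have "\<dots> = a \<cdot>\<^sub>m twirl \<mu> UR UA A + b \<cdot>\<^sub>m twirl \<mu> UR UA B"
    unfolding twirl_eq_mat_integral[OF A] twirl_eq_mat_integral[OF B]
    using A B by (intro mat_integral_lincomb integrable_twirl_index)
      (auto simp: space_eq intro: sandwich_carrier[OF URA_carrier])
  finally show ?thesis .
qed

lemma hermitian_twirl:
  assumes "hermitian M" "M \<in> carrier_mat (d*dA) (d*dA)"
  shows "hermitian (twirl \<mu> UR UA M)"
  unfolding twirl_eq_mat_integral[OF assms(2)] using assms
  by (intro hermitian_mat_integral)
    (auto simp: space_eq intro: sandwich_carrier[OF URA_carrier] hermitian_sandwich[OF _ _ URA_carrier])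

lemma URA_sandwich_kron:
  assumes "g \<in> carrier G" "E \<in> carrier_mat d d" "B \<in> carrier_mat dA dA"
  shows "URA g * kron E B * mat_adjoint (URA g)
       = kron (UR g * E * mat_adjoint (UR g)) (UA g * B * mat_adjoint (UA g))"
proof -
  have U: "UR g \<in> carrier_mat d d" and V: "UA g \<in> carrier_mat dA dA"
    using UR_carrier UA_carrier assms(1) by auto
  have "URA g * kron E B = kron (UR g * E) (UA g * B)"
    by (rule kron_mult[OF U V assms(2,3)])
  then show ?thesis
    using kron_adjoint[OF U V] kron_mult[of "UR g * E" d d "UA g * B" dA dA "mat_adjoint (UR g)" d "mat_adjoint (UA g)" dA]
      U V assms(2,3) by simp
qed

lemma twirl_kron:
  assumes "E \<in> carrier_mat d d" "B \<in> carrier_mat dA dA"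
  shows "twirl \<mu> UR UA (kron E B) = mat_integral \<mu> (d*dA) (d*dA)
           (\<lambda>g. kron (UR g * E * mat_adjoint (UR g)) (UA g * B * mat_adjoint (UA g)))"
  using assms unfolding twirl_eq_mat_integral[OF kron_carrier[OF assms]]
  by (intro mat_integral_cong URA_sandwich_kron) (auto simp: space_eq)

end

locale twirl_state = twirl_setting +
  fixes \<tau> :: "complex mat"
  assumes tau: "is_state dA \<tau>"
begin

abbreviation Omega :: "complex mat \<Rightarrow> complex mat" where
  "Omega E \<equiv> twirl \<mu> UR UA (kron E \<tau>)"

definition S :: "complex mat" where
  "S = complex_of_real (1 / real d) \<cdot>\<^sub>m mat_integral \<mu> dA dA (\<lambda>g. UA g * \<tau> * mat_adjoint (UA g))"

lemma tau_carrier: "\<tau> \<in> carrier_mat dA dA"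
  using tau unfolding is_state_def by simp

lemma tau_psd: "psd \<tau>"
  using tau unfolding is_state_def by simp

lemma hermitian_tau: "hermitian \<tau>"
  using psd_imp_hermitian[OF tau_psd] .

lemma integrable_tau_index:
  "i < dA \<Longrightarrow> j < dA \<Longrightarrow> integrable \<mu> (\<lambda>g. (UA g * \<tau> * mat_adjoint (UA g)) $$ (i,j))"
  by (rule integrable_sandwich_index[where A = UA and n = dA])
    (use UA_carrier continuous_UA_index tau_carrier in auto)

lemma S_carrier: "S \<in> carrier_mat dA dA"
  unfolding S_def by simp

lemma psd_S: "psd S"
proof -
  have "psd (mat_integral \<mu> dA dA (\<lambda>g. UA g * \<tau> * mat_adjoint (UA g)))"
    by (intro psd_mat_integral integrable_tau_index)
      (auto simp: space_eq intro: sandwich_carrier[OF UA_carrier tau_carrier] psd_sandwich[OF tau_psd tau_carrier UA_carrier])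
  then show ?thesis unfolding S_def using d_pos by (subst psd_smult_iff[of _ dA]) auto
qed

lemma mtrace_S: "mtrace S = complex_of_real (1 / real d)"
proof -
  interpret prob_space \<mu> using haar unfolding normalized_haar_def by auto
  have "mtrace (mat_integral \<mu> dA dA (\<lambda>g. UA g * \<tau> * mat_adjoint (UA g)))
      = (LINT g|\<mu>. mtrace (UA g * \<tau> * mat_adjoint (UA g)))"
    by (intro mtrace_mat_integral integrable_tau_index)
      (auto simp: space_eq intro: sandwich_carrier[OF UA_carrier tau_carrier])
  also have "\<dots> = (LINT g|\<mu>. 1)"
    using tau unfolding is_state_def
    by (intro Bochner_Integration.integral_cong) (auto simp: space_eq mtrace_unitary_conj[OF UA_unitary])
  finally show ?thesis unfolding S_def by (simp add: mtrace_smult[of _ dA] prob_space)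
qed

lemma Omega_carrier: "E \<in> carrier_mat d d \<Longrightarrow> Omega E \<in> carrier_mat (d*dA) (d*dA)"
  using tau_carrier by (intro twirl_carrier) simp

lemma hermitian_Omega: "hermitian E \<Longrightarrow> E \<in> carrier_mat d d \<Longrightarrow> hermitian (Omega E)"
  using tau_carrier by (intro hermitian_twirl hermitian_kron hermitian_tau) auto

lemma Omega_maximally_mixed: "Omega (maximally_mixed d) = kron (1\<^sub>m d) S"
proof -
  have "Omega (maximally_mixed d)
      = mat_integral \<mu> (d*dA) (d*dA) (\<lambda>g. kron (maximally_mixed d) (UA g * \<tau> * mat_adjoint (UA g)))"
    unfolding twirl_kron[OF maximally_mixed_carrier tau_carrier]
    by (intro mat_integral_cong) (simp add: space_eq unitary_conj_maximally_mixed UR_unitary)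
  also have "\<dots> = kron (maximally_mixed d) (mat_integral \<mu> dA dA (\<lambda>g. UA g * \<tau> * mat_adjoint (UA g)))"
    by (intro mat_integral_kron_left maximally_mixed_carrier)
      (auto simp: space_eq intro: sandwich_carrier[OF UA_carrier tau_carrier])
  finally show ?thesis unfolding maximally_mixed_def S_def kron_smult_left .
qed

lemma partial_trace_Omega:
  assumes E: "E \<in> carrier_mat d d" "mtrace E = 1"
  shows "partial_trace_fst d dA (Omega E) = of_nat d \<cdot>\<^sub>m S"
proof -
  have KE: "kron E \<tau> \<in> carrier_mat (d*dA) (d*dA)" using E tau_carrier by simp
  have "partial_trace_fst d dA (Omega E)
      = mat_integral \<mu> dA dA (\<lambda>g. partial_trace_fst d dA (URA g * kron E \<tau> * mat_adjoint (URA g)))"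
    unfolding twirl_eq_mat_integral[OF KE]
    by (intro partial_trace_fst_mat_integral integrable_twirl_index[OF KE])
  also have "\<dots> = mat_integral \<mu> dA dA (\<lambda>g. UA g * \<tau> * mat_adjoint (UA g))"
  proof (rule mat_integral_cong)
    fix g assume "g \<in> space \<mu>"
    then have g: "g \<in> carrier G" by (simp add: space_eq)
    have "mtrace (UR g * E * mat_adjoint (UR g)) = 1"
      using mtrace_unitary_conj[OF UR_unitary[OF g] E(1)] E(2) by simp
    then show "partial_trace_fst d dA (URA g * kron E \<tau> * mat_adjoint (URA g)) = UA g * \<tau> * mat_adjoint (UA g)"
      unfolding URA_sandwich_kron[OF g E(1) tau_carrier]
      using UR_carrier[OF g] UA_carrier[OF g] E(1) tau_carrier
      by (subst partial_trace_fst_kron[of _ d _ dA]) (auto intro: sandwich_carrier)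
  qed
  also have "\<dots> = of_nat d \<cdot>\<^sub>m S"
    unfolding S_def using d_pos by (intro eq_matI) auto
  finally show ?thesis .
qed

lemma loewner_le_S_if_dominating:
  assumes E: "E \<in> carrier_mat d d" "mtrace E = 1" and Z: "Z \<in> carrier_mat dA dA"
    and le: "loewner_le (Omega E) (kron (1\<^sub>m d) Z)"
  shows "loewner_le S Z"
proof -
  have "loewner_le (of_nat d \<cdot>\<^sub>m S) (of_nat d \<cdot>\<^sub>m Z)"
    using loewner_le_partial_trace_fst[OF le Omega_carrier[OF E(1)]]
    unfolding partial_trace_Omega[OF E] partial_trace_fst_kron[OF one_carrier_mat Z] mtrace_one .
  then show ?thesis
    using loewner_le_affine_iff[OF S_carrier Z zero_carrier_mat, of "real d"] d_pos S_carrier Z by simp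
qed

lemma dominating_traces_ge:
  assumes E: "E \<in> carrier_mat d d" "mtrace E = 1" and t: "t \<in> dominating_traces d dA (Omega E)"
  shows "t \<ge> 1 / real d"
proof -
  obtain Z where Z: "Z \<in> carrier_mat dA dA" "loewner_le (Omega E) (kron (1\<^sub>m d) Z)" and "t = Re (mtrace Z)"
    using t unfolding dominating_traces_def by blast
  then show ?thesis
    using loewner_le_Re_mtrace[OF loewner_le_S_if_dominating[OF E Z] S_carrier] mtrace_S by simp
qed

lemma Inf_dominating_traces:
  assumes E: "E \<in> carrier_mat d d" "hermitian E" "mtrace E = 1"
  shows "dominating_traces d dA (Omega E) \<noteq> {}" "bdd_below (dominating_traces d dA (Omega E))"
    and "Inf (dominating_traces d dA (Omega E)) \<ge> 1 / real d"
proof -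
  show ne: "dominating_traces d dA (Omega E) \<noteq> {}"
    by (rule dominating_traces_nonempty[OF hermitian_Omega[OF E(2,1)] Omega_carrier[OF E(1)]])
  show "bdd_below (dominating_traces d dA (Omega E))"
    using dominating_traces_ge[OF E(1,3)] by (rule bdd_belowI)
  show "Inf (dominating_traces d dA (Omega E)) \<ge> 1 / real d"
    using dominating_traces_ge[OF E(1,3)] by (rule cInf_greatest[OF ne])
qed

lemma Hmin_Omega:
  assumes E: "E \<in> carrier_mat d d" "hermitian E" "mtrace E = 1"
  shows "2 powr (- Hmin d dA (Omega E)) = Inf (dominating_traces d dA (Omega E))"
proof -
  have "Hmin d dA (Omega E) = - log 2 (Inf (dominating_traces d dA (Omega E)))"
    using psd_loewner_le_trans[OF psd_S loewner_le_S_if_dominating[OF E(1,3)] S_carrier]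
    by (rule Hmin_eq_dominating_traces)
  moreover have "Inf (dominating_traces d dA (Omega E)) > 0"
    using Inf_dominating_traces(3)[OF E] d_pos by (auto intro: order_less_le_trans[of 0 "1 / real d"])
  ultimately show ?thesis by simp
qed

lemma Inf_dominating_traces_maximally_mixed:
  "Inf (dominating_traces d dA (Omega (maximally_mixed d))) = 1 / real d"
proof -
  have mm: "maximally_mixed d \<in> carrier_mat d d" "hermitian (maximally_mixed d)" "mtrace (maximally_mixed d) = 1"
    using maximally_mixed_carrier hermitian_maximally_mixed mtrace_maximally_mixed d_pos by auto
  have "Re (mtrace S) \<in> dominating_traces d dA (Omega (maximally_mixed d))"
    unfolding dominating_traces_def Omega_maximally_mixed
    using S_carrier loewner_le_refl[OF kron_carrier[OF one_carrier_mat S_carrier]] by blast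
  then have "Inf (dominating_traces d dA (Omega (maximally_mixed d))) \<le> 1 / real d"
    using cInf_lower[OF _ Inf_dominating_traces(2)[OF mm]] mtrace_S by fastforce
  then show ?thesis using Inf_dominating_traces(3)[OF mm] by simp
qed

lemma Omega_affine:
  assumes "E \<in> carrier_mat d d"
  shows "Omega (complex_of_real l \<cdot>\<^sub>m E + complex_of_real (1 - l) \<cdot>\<^sub>m maximally_mixed d)
       = complex_of_real l \<cdot>\<^sub>m Omega E + complex_of_real (1 - l) \<cdot>\<^sub>m kron (1\<^sub>m d) S"
  unfolding kron_lincomb_left[OF assms maximally_mixed_carrier] Omega_maximally_mixed[symmetric]
  using assms maximally_mixed_carrier tau_carrier by (intro twirl_lincomb) auto

lemma Phi_eq_Inf:
  assumes "x \<in> state_coeffs d X"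
  shows "Phi \<mu> UR UA d dA X \<tau> x = Inf (dominating_traces d dA (Omega (eta d X x)))"
  unfolding Phi_def using Hmin_Omega[OF state_coeffs_eta[OF assms]] .

lemma Phi_zero: "Phi \<mu> UR UA d dA X \<tau> (\<lambda>_. 0) = 1 / real d"
  unfolding Phi_def eta_zero
  using Hmin_Omega[OF maximally_mixed_carrier hermitian_maximally_mixed mtrace_maximally_mixed[OF d_pos]]
    Inf_dominating_traces_maximally_mixed by simp

lemma Phi_ge: "x \<in> state_coeffs d X \<Longrightarrow> Phi \<mu> UR UA d dA X \<tau> x \<ge> 1 / real d"
  using Phi_eq_Inf Inf_dominating_traces(3)[OF state_coeffs_eta] by simp

lemma Phi_scale:
  assumes l: "l > 0" and x: "x \<in> state_coeffs d X" and lx: "(\<lambda>k. l * x k) \<in> state_coeffs d X"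
  shows "Phi \<mu> UR UA d dA X \<tau> (\<lambda>k. l * x k) = l * Phi \<mu> UR UA d dA X \<tau> x + (1 - l) / real d"
proof -
  let ?D = "dominating_traces d dA (Omega (eta d X x))"
  have "dominating_traces d dA (Omega (eta d X (\<lambda>k. l * x k))) = (\<lambda>t. l * t + (1 - l) * Re (mtrace S)) ` ?D"
    unfolding eta_scale Omega_affine[OF state_coeffs_eta(1)[OF x]]
    by (rule dominating_traces_affine[OF Omega_carrier[OF state_coeffs_eta(1)[OF x]] S_carrier l])
  then have "Phi \<mu> UR UA d dA X \<tau> (\<lambda>k. l * x k) = Inf ((\<lambda>t. l * t + (1 - l) / real d) ` ?D)"
    using Phi_eq_Inf[OF lx] mtrace_S by simp
  also have "\<dots> = l * Inf ?D + (1 - l) / real d"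
    using Inf_dominating_traces(1,2)[OF state_coeffs_eta[OF x]] l by (rule Inf_affine_image)
  finally show ?thesis using Phi_eq_Inf[OF x] by simp
qed

end

theorem lemma3:
  fixes G :: "('g, 'b) monoid_scheme" and T :: "'g topology" and \<mu> :: "'g measure"
    and UR UA :: "'g \<Rightarrow> complex mat" and d dA :: nat
    and X :: "nat \<Rightarrow> complex mat" and \<tau> :: "complex mat"
  assumes "compact_group G T"
    and "normalized_haar G T \<mu>"
    and "d \<ge> 1"
    and "unitary_rep G T d UR"
    and "unitary_rep G T dA UA"
    and "gen_basis d X"
    and "is_state dA \<tau>"
  shows "(\<forall>l :: real. \<forall>x. l \<ge> 0 \<longrightarrow> x \<in> state_coeffs d X \<longrightarrow> (\<lambda>k. l * x k) \<in> state_coeffs d X \<longrightarrow>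
            Phi_tilde \<mu> UR UA d dA X \<tau> (\<lambda>k. l * x k) = l * Phi_tilde \<mu> UR UA d dA X \<tau> x)
       \<and> (\<forall>x \<in> state_coeffs d X. Phi_tilde \<mu> UR UA d dA X \<tau> x \<ge> 0)"
proof -
  interpret twirl_state G T \<mu> UR UA d dA \<tau>
    using assms by unfold_locales
  have "Phi_tilde \<mu> UR UA d dA X \<tau> (\<lambda>k. l * x k) = l * Phi_tilde \<mu> UR UA d dA X \<tau> x"
    if "l \<ge> 0" "x \<in> state_coeffs d X" "(\<lambda>k. l * x k) \<in> state_coeffs d X" for l x
  proof (cases "l = 0")
    case True
    then show ?thesis unfolding Phi_tilde_def by simp
  next
    case False
    then show ?thesis
      using that Phi_scale[of l x X] unfolding Phi_tilde_def Phi_zero by (simp add: algebra_simps diff_divide_distrib)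
  qed
  moreover have "Phi_tilde \<mu> UR UA d dA X \<tau> x \<ge> 0" if "x \<in> state_coeffs d X" for x
    using Phi_ge[OF that] unfolding Phi_tilde_def Phi_zero by simp
  ultimately show ?thesis by blast
qed

end
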